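(* Let $k\ge 1$ be an integer, $S$ a poset, and let $S\otimes_i G_i$ and $S\otimes_i H_i$ be terminating ordered joins in the same shape $S$. If $\Gamma_k(G_i)=\Gamma_k(H_i)$ for every $i\in S$, then $\Gamma_k(S\otimes_i G_i)=\Gamma_k(S\otimes_i H_i)$.
   Context: All games are impartial combinatorial games under normal play; a game is determined by its set of options, and $G \to G'$ means $G'$ is an option of $G$. A game is terminating if it admits no infinite sequence of moves. $\mathbf{0}$ denotes the game with no options. For terminating games define recursively: $\Gamma_0(G)=\operatorname{mex}\{\Gamma_0(G') : G\to G'\}$ (the Grundy number; $\operatorname{mex}\Lambda$ is the least ordinal not in the set of ordinals $\Lambda$), and for $k\ge1$, $\Gamma_k(G)=\{\Gamma_{k-1}(G') : G\to G'\}$. Ordered join: for a poset $S$ and a family $(G_i)_{i\in S}$ of games, $S \otimes_i G_i$ is the game whose options are exactly the ordered joins $S \otimes_i G'_i$ obtained by choosing one $i_0\in S$ and an option $G_{i_0}\to G'_{i_0}$, and setting $G'_i=\mathbf{0}$ for all $i>i_0$ and $G'_i=G_i$ for all other $i\ne i_0$. *)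

theory Defs
  imports Main
begin

text \<open>Games are modelled as nodes of an abstract move structure: a type 'g together with
  an option map opts :: 'g => 'g set (G -> G' iff G' : opts G).\<close>

definition terminating :: "('g \<Rightarrow> 'g set) \<Rightarrow> 'g \<Rightarrow> bool" where
  "terminating opts G \<longleftrightarrow> G \<in> Wellfounded.acc {(G', H). G' \<in> opts H}"

text \<open>mex of a set of ordinals; ordinals are elements of a well-ordered type 'o.\<close>
definition mex :: "'o::wellorder set \<Rightarrow> 'o" where
  "mex A = (LEAST a. a \<notin> A)"

inductive grundy_rel :: "('g \<Rightarrow> 'g set) \<Rightarrow> 'g \<Rightarrow> 'o::wellorder \<Rightarrow> bool" for opts where
  "(\<forall>G'\<in>opts G. grundy_rel opts G' (f G')) \<Longrightarrow> grundy_rel opts G (mex (f ` opts G))"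

definition grundy :: "('g \<Rightarrow> 'g set) \<Rightarrow> 'g \<Rightarrow> 'o::wellorder" where
  "grundy opts G = (THE a. grundy_rel opts G a)"

text \<open>gamma_eq TYPE('o) opts k G H expresses Gamma_k(G) = Gamma_k(H):
  Gamma_0 is the Grundy number, and Gamma_(k+1)(G) = {Gamma_k(G') : G -> G'}, so equality of
  Gamma_(k+1) is equality of the two image sets.\<close>
primrec gamma_eq :: "'o::wellorder itself \<Rightarrow> ('g \<Rightarrow> 'g set) \<Rightarrow> nat \<Rightarrow> 'g \<Rightarrow> 'g \<Rightarrow> bool" where
  "gamma_eq t opts 0 G H \<longleftrightarrow> (grundy opts G :: 'o) = grundy opts H"
| "gamma_eq t opts (Suc k) G H \<longleftrightarrow>
     (\<forall>G'\<in>opts G. \<exists>H'\<in>opts H. gamma_eq t opts k G' H') \<and>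
     (\<forall>H'\<in>opts H. \<exists>G'\<in>opts G. gamma_eq t opts k G' H')"

text \<open>oj is the ordered join over the poset 'i (the whole type, with its order), z the game 0:
  the options of oj Gs are exactly the joins obtained by moving in one component i0 and
  resetting all components i > i0 to 0.\<close>
definition is_ordered_join ::
  "('g \<Rightarrow> 'g set) \<Rightarrow> 'g \<Rightarrow> (('i::order \<Rightarrow> 'g) \<Rightarrow> 'g) \<Rightarrow> bool" where
  "is_ordered_join opts z oj \<longleftrightarrow>
     opts z = {} \<and>
     (\<forall>Gs. opts (oj Gs) =
        {oj (\<lambda>i. if i = i0 then G' else if i0 < i then z else Gs i) | i0 G'. G' \<in> opts (Gs i0)})"

end

theory Submission
  imports Defs
begin

(* Call two families A, B almost Gamma_(m+1)-equal if all components are Gamma_(m+1)-equal,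
   except possibly components above which both families are 0; these need only be
   Gamma_m-equal. If the i-th components are Gamma_(m+1)-equal, a move to A' in component i of
   the join of A can be copied by a move to some B' with Gamma_m(A') = Gamma_m(B'), and since
   everything above i is reset to 0, the two resulting families are almost Gamma_m-equal.
   So it suffices to show, by induction on m, that terminating joins of almost
   Gamma_(m+1)-equal families are Gamma_m-equal; for m > 0 this is the copying step again.
   For m = 0 the copying strategy fails only at a top component where merely the Grundy
   values agree and the move raises the Grundy value; such a move is reversed inside the same
   component back to the old Grundy value, which keeps the families almost Gamma_1-equal.
   Hence the sum of the two joins is a second-player win and their Grundy values agree. *)

lemma terminating_opt: "terminating opts G \<Longrightarrow> G' \<in> opts G \<Longrightarrow> terminating opts G'"
  unfolding terminating_def by (erule acc_downward) simp

lemma grundy_rel_unique: "grundy_rel opts G a \<Longrightarrow> grundy_rel opts G b \<Longrightarrow> a = b"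
proof (induction arbitrary: b rule: grundy_rel.induct)
  case (1 G f)
  from 1(2) obtain f' where f': "\<forall>G'\<in>opts G. grundy_rel opts G' (f' G')"
    and b: "b = mex (f' ` opts G)"
    by (cases rule: grundy_rel.cases) auto
  have "f ` opts G = f' ` opts G"
    using 1(1) f' by (intro image_cong) auto
  then show ?case using b by simp
qed

lemma grundy_eqI: "grundy_rel opts G a \<Longrightarrow> grundy opts G = a"
  unfolding grundy_def by (blast intro: the_equality grundy_rel_unique)

lemma grundy_rel_grundy:
  "terminating opts G \<Longrightarrow> grundy_rel opts G (grundy opts G :: 'o::wellorder)"
  unfolding terminating_def
proof (induction rule: acc_induct_rule)
  case (1 G)
  have "grundy_rel opts G (mex ((grundy opts :: _ \<Rightarrow> 'o) ` opts G))"
    by (rule grundy_rel.intros) (use 1 in auto)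
  then show ?case by (simp add: grundy_eqI)
qed

lemma grundy_mex:
  assumes "terminating opts G"
  shows "(grundy opts G :: 'o::wellorder) = mex (grundy opts ` opts G)"
  by (intro grundy_eqI grundy_rel.intros ballI grundy_rel_grundy terminating_opt[OF assms])

lemma mex_notin:
  assumes "A \<noteq> UNIV"
  shows "mex A \<notin> A"
proof -
  obtain a where "a \<notin> A" using assms by blast
  then show ?thesis unfolding mex_def by (rule LeastI)
qed

lemma less_mex_in: "a < mex A \<Longrightarrow> a \<in> A"
  unfolding mex_def using not_less_Least by blast

lemma grundy_less_option:
  assumes "terminating opts G" "a < (grundy opts G :: 'o::wellorder)"
  obtains G' where "G' \<in> opts G" "grundy opts G' = a"
  using assms less_mex_in[of a "grundy opts ` opts G"] by (auto simp: grundy_mex[symmetric])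

lemma gamma_eq_refl: "gamma_eq t opts k G G"
  by (induction k arbitrary: G) auto

lemma gamma_eq_sym: "gamma_eq t opts k G H \<Longrightarrow> gamma_eq t opts k H G"
  by (induction k arbitrary: G H) (simp, fastforce)

lemma gamma_eq_Suc_0_iff:
  "gamma_eq (t :: 'o::wellorder itself) opts (Suc 0) G H \<longleftrightarrow>
     (grundy opts ` opts G :: 'o set) = grundy opts ` opts H"
  by (simp add: set_eq_iff image_iff) (blast intro: sym)

lemma gamma_eq_SucD:
  fixes t :: "'o::wellorder itself"
  assumes "terminating opts G" "terminating opts H" "gamma_eq t opts (Suc k) G H"
  shows "gamma_eq t opts k G H"
  using assms
proof (induction k arbitrary: G H)
  case 0
  then show ?case
    using grundy_mex[OF 0(1), where 'o='o] grundy_mex[OF 0(2), where 'o='o]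
    by (simp only: gamma_eq_Suc_0_iff gamma_eq.simps(1))
next
  case (Suc k)
  have "gamma_eq t opts k G' H'"
    if "G' \<in> opts G" "H' \<in> opts H" "gamma_eq t opts (Suc k) G' H'" for G' H'
    using Suc.IH[OF terminating_opt[OF Suc.prems(1) that(1)]
        terminating_opt[OF Suc.prems(2) that(2)] that(3)] .
  with Suc.prems(3) show ?case
    unfolding gamma_eq.simps(2) by blast
qed

(* Restricted to terminating summands, so that the relation is well-founded. *)
definition sum_moves :: "('g \<Rightarrow> 'g set) \<Rightarrow> (('g \<times> 'g) \<times> ('g \<times> 'g)) set" where
  "sum_moves opts =
     {((X', Y), (X, Y)) | X X' Y. X' \<in> opts X \<and> terminating opts X} \<union>
     {((X, Y'), (X, Y)) | X Y Y'. Y' \<in> opts Y \<and> terminating opts Y}"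

lemma wf_terminating_moves: "wf {(G', G). G' \<in> opts G \<and> terminating opts G}"
proof (rule acc_wfI, intro allI)
  fix G
  show "G \<in> Wellfounded.acc {(G', G). G' \<in> opts G \<and> terminating opts G}"
  proof (cases "terminating opts G")
    case True
    then show ?thesis
      unfolding terminating_def by (rule subsetD[OF acc_subset, rotated]) auto
  next
    case False
    then show ?thesis by (auto intro: acc.accI)
  qed
qed

lemma wf_sum_moves: "wf (sum_moves opts)"
  by (rule wf_subset[OF wf_lex_prod[OF wf_terminating_moves wf_terminating_moves]])
    (auto simp: sum_moves_def)

lemma sum_moves_trancl_swap:
  "(p, q) \<in> (sum_moves opts)\<^sup>+ \<Longrightarrow> (prod.swap p, prod.swap q) \<in> (sum_moves opts)\<^sup>+"
proof (induction rule: trancl_induct)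
  case (base q)
  then show ?case by (auto simp: sum_moves_def)
next
  case (step q r)
  then have "(prod.swap q, prod.swap r) \<in> sum_moves opts" by (auto simp: sum_moves_def)
  with step.IH show ?case by (rule trancl_into_trancl)
qed

(* Without a surjection from games onto 'o, no set of Grundy values of options is all of 'o,
   so mex never falls back to the junk value of LEAST on an unsatisfiable predicate. *)
context
  fixes opts :: "'g \<Rightarrow> 'g set"
  assumes no_surj: "\<nexists>f :: 'g \<Rightarrow> 'o::wellorder. surj f"
begin

lemma grundy_option_neq:
  assumes "terminating opts G" "G' \<in> opts G"
  shows "(grundy opts G' :: 'o) \<noteq> grundy opts G"
proof -
  have "(grundy opts ` opts G :: 'o set) \<noteq> UNIV"
    using no_surj by (metis image_mono subset_UNIV top.extremum_unique)
  then show ?thesis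
    using mex_notin assms by (metis grundy_mex image_eqI)
qed

lemma grundy_eq_answer:
  assumes tG: "terminating opts G" and tH: "terminating opts H"
    and eq: "(grundy opts G :: 'o) = grundy opts H" and G': "G' \<in> opts G"
  obtains (match) H' where "H' \<in> opts H" "(grundy opts G' :: 'o) = grundy opts H'"
    | (reverse) G'' where "G'' \<in> opts G'" "(grundy opts G'' :: 'o) = grundy opts H"
proof (cases "(grundy opts G' :: 'o) < grundy opts G")
  case True
  with tH eq obtain H' where "H' \<in> opts H" "(grundy opts H' :: 'o) = grundy opts G'"
    by (metis grundy_less_option)
  then show ?thesis using match by simp
next
  case False
  with grundy_option_neq[OF tG G'] have "(grundy opts H :: 'o) < grundy opts G'"
    using eq by simp
  with terminating_opt[OF tG G'] show ?thesis
    by (metis grundy_less_option reverse)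
qed

(* E X Y says that the sum X + Y is a second-player win, witnessed by answers that stay in E. *)
context
  fixes E :: "'g \<Rightarrow> 'g \<Rightarrow> bool"
  assumes E_sym: "\<And>X Y. E X Y \<Longrightarrow> E Y X"
    and E_terminating: "\<And>X Y. E X Y \<Longrightarrow> terminating opts X"
    and E_answer: "\<And>X Y X'. E X Y \<Longrightarrow> X' \<in> opts X \<Longrightarrow>
      (\<exists>X''\<in>opts X'. E X'' Y) \<or> (\<exists>Y'\<in>opts Y. E X' Y')"
begin

lemma grundy_not_less_if_answered:
  assumes E: "E X Y"
    and IH: "\<And>X' Y'. ((X', Y'), (X, Y)) \<in> (sum_moves opts)\<^sup>+ \<Longrightarrow> E X' Y' \<Longrightarrow>
      (grundy opts X' :: 'o) = grundy opts Y'"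
  shows "\<not> (grundy opts Y :: 'o) < grundy opts X"
proof
  assume less: "(grundy opts Y :: 'o) < grundy opts X"
  have tX: "terminating opts X" and tY: "terminating opts Y"
    using E E_sym E_terminating by blast+
  obtain X' where X': "X' \<in> opts X" and gX': "(grundy opts X' :: 'o) = grundy opts Y"
    using tX less by (rule grundy_less_option)
  have tX': "terminating opts X'"
    using tX X' by (rule terminating_opt)
  have move_X: "((X', Z), (X, Z)) \<in> sum_moves opts" for Z
    using X' tX by (auto simp: sum_moves_def)
  from E_answer[OF E X'] consider
      (reverse) X'' where "X'' \<in> opts X'" "E X'' Y"
    | (match) Y' where "Y' \<in> opts Y" "E X' Y'"
    by blast
  then show False
  proof cases
    case reverse
    then have "((X'', Y), (X', Y)) \<in> sum_moves opts"
      using tX' by (auto simp: sum_moves_def)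
    with move_X have "(grundy opts X'' :: 'o) = grundy opts Y"
      using IH reverse(2) by (meson trancl.intros)
    with gX' grundy_option_neq[OF tX' reverse(1)] show False by simp
  next
    case match
    then have "((X', Y'), (X', Y)) \<in> sum_moves opts"
      using tY by (auto simp: sum_moves_def)
    with move_X have "(grundy opts X' :: 'o) = grundy opts Y'"
      using IH match(2) by (meson trancl.intros)
    with gX' grundy_option_neq[OF tY match(1)] show False by simp
  qed
qed

lemma grundy_eq_if_answered:
  assumes "E X Y"
  shows "(grundy opts X :: 'o) = grundy opts Y"
proof -
  have "E (fst p) (snd p) \<longrightarrow> (grundy opts (fst p) :: 'o) = grundy opts (snd p)" for p
    using wf_trancl[OF wf_sum_moves[of opts]]
  proof (induction p rule: wf_induct_rule)
    case (less p)
    obtain X Y where p: "p = (X, Y)" by fastforce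
    have IH: "(grundy opts X' :: 'o) = grundy opts Y'"
      if "((X', Y'), (X, Y)) \<in> (sum_moves opts)\<^sup>+" "E X' Y'" for X' Y'
      using less[of "(X', Y')"] that p by simp
    show ?case
    proof
      assume E: "E (fst p) (snd p)"
      then have "\<not> (grundy opts Y :: 'o) < grundy opts X"
        using p IH grundy_not_less_if_answered by simp
      moreover have "\<not> (grundy opts X :: 'o) < grundy opts Y"
        using E p E_sym IH sum_moves_trancl_swap
        by (intro grundy_not_less_if_answered) fastforce+
      ultimately show "(grundy opts (fst p) :: 'o) = grundy opts (snd p)"
        using p by simp
    qed
  qed
  with assms show ?thesis by fastforce
qed

end

end

definition move_at :: "'g \<Rightarrow> ('i::order \<Rightarrow> 'g) \<Rightarrow> 'i \<Rightarrow> 'g \<Rightarrow> 'i \<Rightarrow> 'g" where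
  "move_at z A i0 G' = (\<lambda>i. if i = i0 then G' else if i0 < i then z else A i)"

definition almost_gamma_eq ::
  "'o::wellorder itself \<Rightarrow> ('g \<Rightarrow> 'g set) \<Rightarrow> 'g \<Rightarrow> nat \<Rightarrow> ('i::order \<Rightarrow> 'g) \<Rightarrow> ('i \<Rightarrow> 'g) \<Rightarrow> bool"
  where
  "almost_gamma_eq t opts z m A B \<longleftrightarrow>
     (\<forall>i. gamma_eq t opts (Suc m) (A i) (B i) \<or>
          (gamma_eq t opts m (A i) (B i) \<and> (\<forall>j>i. A j = z \<and> B j = z)))"

lemma almost_gamma_eq_sym: "almost_gamma_eq t opts z m A B \<Longrightarrow> almost_gamma_eq t opts z m B A"
  unfolding almost_gamma_eq_def by (metis gamma_eq_sym)

context
  fixes opts :: "'g \<Rightarrow> 'g set" and z :: 'g and oj :: "('i::order \<Rightarrow> 'g) \<Rightarrow> 'g"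
  assumes join: "is_ordered_join opts z oj"
begin

lemma opts_zero: "opts z = {}"
  using join unfolding is_ordered_join_def by simp

lemma opts_join: "opts (oj A) = {oj (move_at z A i G') | i G'. G' \<in> opts (A i)}"
  using join unfolding is_ordered_join_def move_at_def by simp

lemma move_at_in_opts: "G' \<in> opts (A i) \<Longrightarrow> oj (move_at z A i G') \<in> opts (oj A)"
  unfolding opts_join by blast

lemma terminating_component:
  assumes "terminating opts (oj A)"
  shows "terminating opts (A i)"
proof -
  have "\<forall>A. X = oj A \<longrightarrow> A i \<in> Wellfounded.acc {(G', G). G' \<in> opts G}"
    if "X \<in> Wellfounded.acc {(G', G). G' \<in> opts G}" for X
    using that
  proof (induction rule: acc_induct_rule)
    case (1 X)
    show ?case
    proof (intro allI impI)
      fix A assume X: "X = oj A"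
      show "A i \<in> Wellfounded.acc {(G', G). G' \<in> opts G}"
      proof (rule acc.accI)
        fix G' assume "(G', A i) \<in> {(G', G). G' \<in> opts G}"
        then have "oj (move_at z A i G') \<in> opts X"
          using X by (simp add: move_at_in_opts)
        with "1.IH" show "G' \<in> Wellfounded.acc {(G', G). G' \<in> opts G}"
          by (fastforce simp: move_at_def)
      qed
    qed
  qed
  with assms show ?thesis
    unfolding terminating_def by blast
qed

lemma almost_gamma_eq_move:
  assumes C: "almost_gamma_eq t opts z m A B" and A': "A' \<in> opts (A i)"
    and e: "gamma_eq t opts m A' B'"
  shows "almost_gamma_eq t opts z m (move_at z A i A') (move_at z B i B')"
  unfolding almost_gamma_eq_def
proof
  fix j
  consider "j = i" | "i < j" | "j \<noteq> i" "\<not> i < j" by blast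
  then show "gamma_eq t opts (Suc m) (move_at z A i A' j) (move_at z B i B' j) \<or>
      (gamma_eq t opts m (move_at z A i A' j) (move_at z B i B' j) \<and>
       (\<forall>l>j. move_at z A i A' l = z \<and> move_at z B i B' l = z))"
  proof cases
    case 1
    then show ?thesis using e by (simp add: move_at_def)
  next
    case 2
    then have "move_at z A i A' j = move_at z B i B' j" by (auto simp: move_at_def)
    then show ?thesis by (metis gamma_eq_refl)
  next
    case 3
    then have unchanged: "move_at z A i A' j = A j" "move_at z B i B' j = B j"
      by (simp_all add: move_at_def)
    from C consider "gamma_eq t opts (Suc m) (A j) (B j)"
      | "gamma_eq t opts m (A j) (B j)" and "\<forall>l>j. A l = z \<and> B l = z"
      unfolding almost_gamma_eq_def by blast
    then show ?thesis
    proof cases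
      case 1
      with unchanged show ?thesis by simp
    next
      case 2
      have "\<not> j < i" using 2(2) A' opts_zero by auto
      with 2(2) 3 have "\<forall>l>j. move_at z A i A' l = z \<and> move_at z B i B' l = z"
        by (auto simp: move_at_def)
      with 2(1) unchanged show ?thesis by simp
    qed
  qed
qed

lemma almost_gamma_eq_reverse:
  assumes C: "almost_gamma_eq t opts z m A B" and nonempty: "opts (A i) \<noteq> {}"
    and e: "gamma_eq t opts m A'' (B i)" and top: "\<forall>j>i. A j = z \<and> B j = z"
  shows "almost_gamma_eq t opts z m (A(i := A'')) B"
  unfolding almost_gamma_eq_def
proof
  fix j
  have "A i \<noteq> z" using nonempty opts_zero by auto
  with C e top show "gamma_eq t opts (Suc m) ((A(i := A'')) j) (B j) \<or>
      (gamma_eq t opts m ((A(i := A'')) j) (B j) \<and> (\<forall>l>j. (A(i := A'')) l = z \<and> B l = z))"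
    unfolding almost_gamma_eq_def by (cases "j = i") auto
qed

lemma join_option_matched:
  assumes tA: "terminating opts (oj A)" and tB: "terminating opts (oj B)"
    and eq: "\<forall>i. gamma_eq t opts (Suc m) (A i) (B i)"
    and IH: "\<And>A' B'. terminating opts (oj A') \<Longrightarrow> terminating opts (oj B') \<Longrightarrow>
      almost_gamma_eq t opts z m A' B' \<Longrightarrow> gamma_eq t opts m (oj A') (oj B')"
    and X': "X' \<in> opts (oj A)"
  shows "\<exists>Y'\<in>opts (oj B). gamma_eq t opts m X' Y'"
proof -
  obtain i A' where X'_eq: "X' = oj (move_at z A i A')" and A': "A' \<in> opts (A i)"
    using X' unfolding opts_join by blast
  obtain B' where B': "B' \<in> opts (B i)" and eq': "gamma_eq t opts m A' B'"
    using eq A' by (simp only: gamma_eq.simps) blast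
  have Y': "oj (move_at z B i B') \<in> opts (oj B)"
    using B' by (rule move_at_in_opts)
  have "almost_gamma_eq t opts z m A B"
    using eq unfolding almost_gamma_eq_def by blast
  then have "almost_gamma_eq t opts z m (move_at z A i A') (move_at z B i B')"
    using A' eq' by (rule almost_gamma_eq_move)
  moreover have "terminating opts X'" "terminating opts (oj (move_at z B i B'))"
    using tA X' tB Y' by (blast intro: terminating_opt)+
  ultimately show ?thesis
    using IH Y' X'_eq by blast
qed

lemma gamma_eq_Suc_join:
  assumes tA: "terminating opts (oj A)" and tB: "terminating opts (oj B)"
    and eq: "\<forall>i. gamma_eq t opts (Suc m) (A i) (B i)"
    and IH: "\<And>A' B'. terminating opts (oj A') \<Longrightarrow> terminating opts (oj B') \<Longrightarrow>
      almost_gamma_eq t opts z m A' B' \<Longrightarrow> gamma_eq t opts m (oj A') (oj B')"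
  shows "gamma_eq t opts (Suc m) (oj A) (oj B)"
proof -
  have "\<forall>X'\<in>opts (oj A). \<exists>Y'\<in>opts (oj B). gamma_eq t opts m X' Y'"
    using join_option_matched[OF tA tB eq IH] by blast
  moreover have "\<forall>Y'\<in>opts (oj B). \<exists>X'\<in>opts (oj A). gamma_eq t opts m X' Y'"
  proof
    fix Y' assume "Y' \<in> opts (oj B)"
    moreover have "\<forall>i. gamma_eq t opts (Suc m) (B i) (A i)"
      using eq by (meson gamma_eq_sym)
    ultimately obtain X' where "X' \<in> opts (oj A)" "gamma_eq t opts m Y' X'"
      using join_option_matched[OF tB tA _ IH] by blast
    then show "\<exists>X'\<in>opts (oj A). gamma_eq t opts m X' Y'"
      by (meson gamma_eq_sym)
  qed
  ultimately show ?thesis by simp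
qed

context
  assumes no_surj: "\<nexists>f :: 'g \<Rightarrow> 'o::wellorder. surj f"
begin

lemma almost_gamma_eq_0_answer:
  assumes tA: "terminating opts (oj A)" and tB: "terminating opts (oj B)"
    and C: "almost_gamma_eq TYPE('o) opts z 0 A B" and X': "X' \<in> opts (oj A)"
  obtains (reverse) A'' where "oj A'' \<in> opts X'" "almost_gamma_eq TYPE('o) opts z 0 A'' B"
    | (match) A' B' where "X' = oj A'" "oj B' \<in> opts (oj B)"
        "almost_gamma_eq TYPE('o) opts z 0 A' B'"
proof -
  obtain i A' where X'_eq: "X' = oj (move_at z A i A')" and A': "A' \<in> opts (A i)"
    using X' unfolding opts_join by blast
  have tAi: "terminating opts (A i)" and tBi: "terminating opts (B i)"
    using tA tB by (blast intro: terminating_component)+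
  have matched: thesis if B': "B' \<in> opts (B i)" and eq: "gamma_eq TYPE('o) opts 0 A' B'" for B'
    using X'_eq move_at_in_opts[of B' B i, OF B'] almost_gamma_eq_move[OF C A' eq] by (rule match)
  from C consider "gamma_eq TYPE('o) opts (Suc 0) (A i) (B i)"
    | "gamma_eq TYPE('o) opts 0 (A i) (B i)" and "\<forall>j>i. A j = z \<and> B j = z"
    unfolding almost_gamma_eq_def by blast
  then show thesis
  proof cases
    case 1
    with A' matched show thesis by auto
  next
    case 2
    then have "(grundy opts (A i) :: 'o) = grundy opts (B i)" by simp
    with no_surj tAi tBi show thesis using A'
    proof (cases rule: grundy_eq_answer)
      case (match B')
      then show thesis by (intro matched) auto
    next
      case (reverse A'')
      have "move_at z (move_at z A i A') i A'' = A(i := A'')"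
        using 2(2) by (auto simp: move_at_def)
      then have "oj (A(i := A'')) \<in> opts X'"
        using move_at_in_opts[of A'' "move_at z A i A'" i] reverse(1) X'_eq
        by (simp add: move_at_def)
      moreover have "almost_gamma_eq TYPE('o) opts z 0 (A(i := A'')) B"
        using C A' reverse(2) 2(2) by (intro almost_gamma_eq_reverse) auto
      ultimately show thesis by (rule that(1))
    qed
  qed
qed

lemma almost_gamma_eq_0_grundy_eq:
  assumes "terminating opts (oj A)" "terminating opts (oj B)"
    and "almost_gamma_eq TYPE('o) opts z 0 A B"
  shows "(grundy opts (oj A) :: 'o) = grundy opts (oj B)"
proof -
  define E where "E X Y \<longleftrightarrow> (\<exists>A B. X = oj A \<and> Y = oj B \<and>
    terminating opts X \<and> terminating opts Y \<and> almost_gamma_eq TYPE('o) opts z 0 A B)" for X Y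
  have "(grundy opts X :: 'o) = grundy opts Y" if "E X Y" for X Y
    using no_surj _ _ _ that
  proof (rule grundy_eq_if_answered)
    show "E Y X" if "E X Y" for X Y
      using that unfolding E_def by (metis almost_gamma_eq_sym)
    show "terminating opts X" if "E X Y" for X Y
      using that unfolding E_def by blast
    show "(\<exists>X''\<in>opts X'. E X'' Y) \<or> (\<exists>Y'\<in>opts Y. E X' Y')"
      if "E X Y" "X' \<in> opts X" for X Y X'
    proof -
      obtain A B where X: "X = oj A" and Y: "Y = oj B" and tX: "terminating opts X"
        and tY: "terminating opts Y" and C: "almost_gamma_eq TYPE('o) opts z 0 A B"
        using \<open>E X Y\<close> unfolding E_def by blast
      have tX': "terminating opts X'" using tX that(2) by (rule terminating_opt)
      from tX[unfolded X] tY[unfolded Y] C that(2)[unfolded X] show ?thesis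
      proof (cases rule: almost_gamma_eq_0_answer)
        case (reverse A'')
        then show ?thesis
          using terminating_opt[OF tX' reverse(1)] tY Y unfolding E_def by blast
      next
        case (match A' B')
        then show ?thesis
          using terminating_opt[OF tY] tX' X Y unfolding E_def by blast
      qed
    qed
  qed
  with assms show ?thesis unfolding E_def by blast
qed

lemma almost_gamma_eq_join:
  "terminating opts (oj A) \<Longrightarrow> terminating opts (oj B) \<Longrightarrow>
    almost_gamma_eq TYPE('o) opts z m A B \<Longrightarrow> gamma_eq TYPE('o) opts m (oj A) (oj B)"
proof (induction m arbitrary: A B)
  case 0
  then show ?case by (simp add: almost_gamma_eq_0_grundy_eq)
next
  case (Suc m)
  have "gamma_eq TYPE('o) opts (Suc m) (A i) (B i)" for i
  proof -
    have "terminating opts (A i)" "terminating opts (B i)"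
      using Suc.prems(1,2) by (blast intro: terminating_component)+
    with Suc.prems(3) show ?thesis
      unfolding almost_gamma_eq_def by (blast intro: gamma_eq_SucD)
  qed
  with Suc.prems(1,2) show ?case
    by (intro gamma_eq_Suc_join allI Suc.IH)
qed

end

end

theorem mainTheorem10:
  fixes opts :: "'g \<Rightarrow> 'g set" and z :: 'g and oj :: "('i::order \<Rightarrow> 'g) \<Rightarrow> 'g"
    and Gs Hs :: "'i \<Rightarrow> 'g" and k :: nat
  assumes big: "\<not> (\<exists>f :: 'g \<Rightarrow> 'o::wellorder. surj f)"
    and join: "is_ordered_join opts z oj"
    and k: "k \<ge> 1"
    and termG: "terminating opts (oj Gs)"
    and termH: "terminating opts (oj Hs)"
    and eq: "\<forall>i. gamma_eq TYPE('o) opts k (Gs i) (Hs i)"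
  shows "gamma_eq TYPE('o) opts k (oj Gs) (oj Hs)"
proof -
  obtain m where k_eq: "k = Suc m" using k by (cases k) auto
  have "gamma_eq TYPE('o) opts (Suc m) (oj Gs) (oj Hs)"
    using join termG termH eq[unfolded k_eq]
  proof (rule gamma_eq_Suc_join)
    show "gamma_eq TYPE('o) opts m (oj A) (oj B)"
      if "terminating opts (oj A)" "terminating opts (oj B)"
        "almost_gamma_eq TYPE('o) opts z m A B" for A B
      using join big that by (rule almost_gamma_eq_join)
  qed
  with k_eq show ?thesis by simp
qed

end
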